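(* Let $K_n$ ($n\ge1$) and $K$ be unconstrained Sierpinski carpets with the same $k,N$, and assume $K_n\to K$ in the Hausdorff metric. Then $\mu_n\Rightarrow\mu$ weakly on $(\square,d)$, where $\mu_n$, $\mu$ are the normalized Hausdorff measures on $K_n$, $K$ and $d$ is the Euclidean metric.
   Context: USC: integers $k\ge3$, $4(k-1)\le N\le k^2-1$; maps $\Psi_i(x)=x/k+c_i$ on $\square=[0,1]^2$ with pairwise intersections of the $\Psi_i(\square)$ a segment, point or empty, $\bigcup_i\Psi_i(\square)$ connected and invariant under the 8 isometries of $\square$, $[0,1]\times\{0\}\subset\bigcup_i\Psi_i(\square)\subset\square$; $K=\bigcup_i\Psi_iK$. The normalized Hausdorff measure of $K$ is the unique probability measure $\mu$ with $\mu=\frac1N\sum_{i=1}^N\mu\circ\Psi_i^{-1}$. *)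

theory Defs
  imports "HOL-Analysis.Analysis" "HOL-Probability.Probability"
begin

text \<open>The unit square, as a subset of the Euclidean plane \<open>real \<times> real\<close>
  (whose \<open>dist\<close> is the Euclidean metric).\<close>
definition usq :: "(real \<times> real) set" where
  "usq = {0..1} \<times> {0..1}"

definition hausdorff_dist :: "(real \<times> real) set \<Rightarrow> (real \<times> real) set \<Rightarrow> real" where
  "hausdorff_dist A B = max (SUP a\<in>A. infdist a B) (SUP b\<in>B. infdist b A)"

definition usc_map :: "nat \<Rightarrow> (nat \<Rightarrow> real \<times> real) \<Rightarrow> nat \<Rightarrow> real \<times> real \<Rightarrow> real \<times> real" where
  "usc_map k c i x = (1 / real k) *\<^sub>R x + c i"

definition square_isometries :: "((real \<times> real) \<Rightarrow> (real \<times> real)) set" where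
  "square_isometries =
     {\<lambda>(x,y). (x,y), \<lambda>(x,y). (1-x,y), \<lambda>(x,y). (x,1-y), \<lambda>(x,y). (1-x,1-y),
      \<lambda>(x,y). (y,x), \<lambda>(x,y). (1-y,x), \<lambda>(x,y). (y,1-x), \<lambda>(x,y). (1-y,1-x)}"

text \<open>Admissible data \<open>(k, N, c_1..c_N)\<close> of an unconstrained Sierpinski carpet
  (maps indexed by \<open>i < N\<close>).\<close>
definition usc_data :: "nat \<Rightarrow> nat \<Rightarrow> (nat \<Rightarrow> real \<times> real) \<Rightarrow> bool" where
  "usc_data k N c \<longleftrightarrow>
     k \<ge> 3 \<and> 4 * (k - 1) \<le> N \<and> N \<le> k\<^sup>2 - 1 \<and>
     (\<forall>i<N. \<forall>j<N. i \<noteq> j \<longrightarrow>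
        usc_map k c i ` usq \<inter> usc_map k c j ` usq = {} \<or>
        (\<exists>a b. usc_map k c i ` usq \<inter> usc_map k c j ` usq = closed_segment a b)) \<and>
     connected (\<Union>i<N. usc_map k c i ` usq) \<and>
     (\<forall>g\<in>square_isometries. g ` (\<Union>i<N. usc_map k c i ` usq) = (\<Union>i<N. usc_map k c i ` usq)) \<and>
     {0..1} \<times> {0} \<subseteq> (\<Union>i<N. usc_map k c i ` usq) \<and>
     (\<Union>i<N. usc_map k c i ` usq) \<subseteq> usq"

text \<open>\<open>K\<close> is the USC (attractor: the unique nonempty compact set with
  \<open>K = \<Union>_i \<Psi>_i K\<close>) generated by the data \<open>(k, N, c)\<close>.\<close>
definition usc :: "nat \<Rightarrow> nat \<Rightarrow> (nat \<Rightarrow> real \<times> real) \<Rightarrow> (real \<times> real) set \<Rightarrow> bool" where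
  "usc k N c K \<longleftrightarrow> usc_data k N c \<and> compact K \<and> K \<noteq> {} \<and>
     K = (\<Union>i<N. usc_map k c i ` K)"

text \<open>\<open>\<mu>\<close> is the normalized Hausdorff measure of the USC with data \<open>(k,N,c)\<close>:
  the (unique) Borel probability measure on the square with
  \<open>\<mu> = (1/N) \<Sum>_i \<mu> \<circ> \<Psi>_i\<^sup>-\<^sup>1\<close>.\<close>
definition usc_measure :: "nat \<Rightarrow> nat \<Rightarrow> (nat \<Rightarrow> real \<times> real) \<Rightarrow> (real \<times> real) measure \<Rightarrow> bool" where
  "usc_measure k N c \<mu> \<longleftrightarrow>
     sets \<mu> = sets (restrict_space borel usq) \<and> prob_space \<mu> \<and>
     (\<forall>A\<in>sets \<mu>. emeasure \<mu> A =
        ennreal (1 / real N) * (\<Sum>i<N. emeasure \<mu> (usc_map k c i -` A \<inter> space \<mu>)))"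

definition weak_conv_on :: "(real \<times> real) set \<Rightarrow> (nat \<Rightarrow> (real \<times> real) measure) \<Rightarrow> (real \<times> real) measure \<Rightarrow> bool" where
  "weak_conv_on S \<mu>s \<mu> \<longleftrightarrow>
     (\<forall>f :: real \<times> real \<Rightarrow> real. continuous_on S f \<and> bounded (f ` S) \<longrightarrow>
        (\<lambda>n. \<integral>x. f x \<partial>(\<mu>s n)) \<longlonglongrightarrow> (\<integral>x. f x \<partial>\<mu>))"

end

theory Submission
  imports Defs
begin

(* Write A g = (1/N) \<Sum>_i g \<circ> \<Psi>_i. For continuous g and every measure \<nu> with the self-similarity
   of usc_measure, \<integral> g d\<nu> = \<integral> A^m g d\<nu>; since the \<Psi>_i contract by 1/k, the oscillation of A^m g
   on the square tends to 0 uniformly in the offsets, so \<integral> g d\<nu> is within \<eta> of (A^m g)(0) for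
   all such \<nu> at once. The value (A^m g)(0) depends continuously on the offsets, and only on the
   set of offsets. By compactness every subsequence of the offsets of K_n has a further
   subsequence converging to some c'. Then K is covered by the c'-cells and invariant under the
   c'-maps, and a rigidity argument (a componentwise minimal offset in the symmetric difference,
   tested against points of K near the origin) shows that c' and c have the same offset set.
   Hence \<integral> g d\<mu>_n \<rightarrow> \<integral> g d\<mu> along that subsequence, and therefore along the whole sequence. *)

lemma LIMSEQ_subsubseq:
  fixes X :: "nat \<Rightarrow> 'a::metric_space"
  assumes "\<And>r :: nat \<Rightarrow> nat. strict_mono r \<Longrightarrow> \<exists>s :: nat \<Rightarrow> nat. strict_mono s \<and> (\<lambda>n. X (r (s n))) \<longlonglongrightarrow> L"
  shows "X \<longlonglongrightarrow> L"
proof (rule ccontr)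
  assume "\<not> X \<longlonglongrightarrow> L"
  then obtain \<epsilon> where "0 < \<epsilon>" and "infinite {n. \<not> dist (X n) L < \<epsilon>}"
    by (auto simp: tendsto_iff not_eventually INFM_iff_infinite cofinite_eq_sequentially[symmetric])
  then obtain r :: "nat \<Rightarrow> nat" where far: "\<And>n. \<not> dist (X (r n)) L < \<epsilon>" and "strict_mono r"
    using enumerate_in_set enumerate_mono by (fastforce simp: strict_mono_def)
  then obtain s where "(\<lambda>n. X (r (s n))) \<longlonglongrightarrow> L"
    using assms \<open>strict_mono r\<close> by blast
  then show False
    using far \<open>0 < \<epsilon>\<close> by (auto dest: tendstoD)
qed

lemma LIMSEQ_uniform_approx:
  fixes a :: "nat \<Rightarrow> real"
  assumes "\<And>\<eta>. 0 < \<eta> \<Longrightarrow> \<exists>b B. (\<forall>n. \<bar>a n - b n\<bar> \<le> \<eta>) \<and> \<bar>A - B\<bar> \<le> \<eta> \<and> b \<longlonglongrightarrow> B"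
  shows "a \<longlonglongrightarrow> A"
  unfolding tendsto_iff
proof (intro allI impI)
  fix \<epsilon> :: real assume "0 < \<epsilon>"
  then obtain b B where b: "\<And>n. \<bar>a n - b n\<bar> \<le> \<epsilon> / 3" "\<bar>A - B\<bar> \<le> \<epsilon> / 3" "b \<longlonglongrightarrow> B"
    using assms[of "\<epsilon> / 3"] by auto
  have "0 < \<epsilon> / 3" using \<open>0 < \<epsilon>\<close> by simp
  then have "\<forall>\<^sub>F n in sequentially. dist (b n) B < \<epsilon> / 3"
    by (rule tendstoD[OF b(3)])
  then show "\<forall>\<^sub>F n in sequentially. dist (a n) A < \<epsilon>"
  proof (rule eventually_mono)
    fix n assume "dist (b n) B < \<epsilon> / 3"
    then show "dist (a n) A < \<epsilon>"
      using b(1)[of n] b(2) unfolding dist_real_def by arith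
  qed
qed

lemma convergent_subseq_finite_tuple:
  fixes a :: "nat \<Rightarrow> nat \<Rightarrow> 'a::metric_space"
  assumes "compact S" "\<And>n i. i < M \<Longrightarrow> a n i \<in> S"
  shows "\<exists>r l. strict_mono r \<and> (\<forall>i<M. (\<lambda>n. a (r n) i) \<longlonglongrightarrow> l i)"
  using assms(2)
proof (induction M)
  case 0
  show ?case using strict_mono_id by blast
next
  case (Suc M)
  then obtain r l where r: "strict_mono r" and l: "\<forall>i<M. (\<lambda>n. a (r n) i) \<longlonglongrightarrow> l i"
    by auto
  have "\<forall>n. a (r n) M \<in> S" using Suc.prems by simp
  then obtain l' r' where "strict_mono r'" and l': "((\<lambda>n. a (r n) M) \<circ> r') \<longlonglongrightarrow> l'"
    using seq_compactE[OF compact_imp_seq_compact[OF assms(1)]] by metis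
  have "(\<lambda>n. a (r (r' n)) i) \<longlonglongrightarrow> (l(M := l')) i" if "i < Suc M" for i
  proof (cases "i = M")
    case False
    then show ?thesis
      using LIMSEQ_subseq_LIMSEQ[OF l[rule_format] \<open>strict_mono r'\<close>] that by (simp add: o_def)
  qed (use l' in \<open>simp add: o_def\<close>)
  moreover have "strict_mono (\<lambda>n. r (r' n))"
    using strict_mono_o[OF r \<open>strict_mono r'\<close>] by (simp add: o_def)
  ultimately show ?case
    by (intro exI[of _ "\<lambda>n. r (r' n)"] exI[of _ "l(M := l')"]) simp
qed

lemma hausdorff_dist_commute: "hausdorff_dist A B = hausdorff_dist B A"
  by (simp add: hausdorff_dist_def max.commute)

lemma infdist_le_hausdorff_dist:
  assumes "compact A" "a \<in> A"
  shows "infdist a B \<le> hausdorff_dist A B"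
proof -
  have "bdd_above ((\<lambda>a. infdist a B) ` A)"
    by (intro bounded_imp_bdd_above compact_imp_bounded compact_continuous_image
        continuous_intros assms(1))
  then have "infdist a B \<le> (SUP a\<in>A. infdist a B)"
    using assms(2) by (rule cSUP_upper2) simp
  then show ?thesis
    unfolding hausdorff_dist_def by simp
qed

lemma hausdorff_limit_approximable:
  fixes L :: "nat \<Rightarrow> (real \<times> real) set"
  assumes "\<And>n. compact (L n)" "\<And>n. L n \<noteq> {}" "compact K"
    and "(\<lambda>n. hausdorff_dist (L n) K) \<longlonglongrightarrow> 0" "x \<in> K"
  obtains y where "\<And>n. y n \<in> L n" "y \<longlonglongrightarrow> x"
proof -
  have "\<exists>y\<in>L n. dist y x \<le> hausdorff_dist (L n) K" for n
  proof -
    obtain y where "y \<in> L n" "infdist x (L n) = dist x y"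
      using infdist_attains_inf[OF compact_imp_closed[OF assms(1)] assms(2)] by blast
    moreover have "infdist x (L n) \<le> hausdorff_dist (L n) K"
      using infdist_le_hausdorff_dist[OF assms(3,5)] by (metis hausdorff_dist_commute)
    ultimately show ?thesis
      by (metis dist_commute)
  qed
  then obtain y where y: "\<And>n. y n \<in> L n" "\<And>n. dist (y n) x \<le> hausdorff_dist (L n) K"
    by metis
  have "(\<lambda>n. dist (y n) x) \<longlonglongrightarrow> 0"
    by (rule tendsto_sandwich[OF _ _ tendsto_const assms(4)]) (auto simp: y(2))
  then show ?thesis
    using that y(1) tendsto_dist_iff by blast
qed

lemma hausdorff_limit_mem:
  fixes L :: "nat \<Rightarrow> (real \<times> real) set"
  assumes "\<And>n. compact (L n)" "compact K" "K \<noteq> {}"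
    and "(\<lambda>n. hausdorff_dist (L n) K) \<longlonglongrightarrow> 0" "\<And>n. y n \<in> L n" "y \<longlonglongrightarrow> z"
  shows "z \<in> K"
proof -
  have "(\<lambda>n. infdist (y n) K) \<longlonglongrightarrow> infdist z K"
    by (intro tendsto_infdist assms(6))
  moreover have "\<forall>n. infdist (y n) K \<le> hausdorff_dist (L n) K"
    using infdist_le_hausdorff_dist[OF assms(1,5)] by blast
  ultimately have "infdist z K \<le> 0"
    by (intro LIMSEQ_le[OF _ assms(4)]) auto
  then show ?thesis
    using in_closed_iff_infdist_zero[OF compact_imp_closed[OF assms(2)] assms(3)] infdist_nonneg[of z K]
    by simp
qed

section \<open>Integrals against self-similar measures\<close>

lemma nn_integral_self_similar:
  fixes T :: "'i \<Rightarrow> 'a \<Rightarrow> 'a" and c :: ennreal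
  assumes T: "\<And>i. i \<in> I \<Longrightarrow> T i \<in> measurable M M"
    and M: "\<And>A. A \<in> sets M \<Longrightarrow> emeasure M A = c * (\<Sum>i\<in>I. emeasure M (T i -` A \<inter> space M))"
    and f: "f \<in> borel_measurable M"
  shows "(\<integral>\<^sup>+x. f x \<partial>M) = c * (\<Sum>i\<in>I. \<integral>\<^sup>+x. f (T i x) \<partial>M)"
proof -
  have "(\<integral>\<^sup>+x. f (T i x) \<partial>M) = integral\<^sup>N (distr M M (T i)) f" if "i \<in> I" for i
    using f by (simp add: nn_integral_distr[OF T[OF that]])
  moreover have "integral\<^sup>N M f = c * (\<Sum>i\<in>I. integral\<^sup>N (distr M M (T i)) f)"
    using f
  proof induct
    case (cong f g)
    have "integral\<^sup>N N f = integral\<^sup>N N g" if "space N = space M" for N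
      using cong.hyps(3) that by (intro nn_integral_cong) simp
    then show ?case
      using cong.hyps(4) by simp
  next
    case (set A)
    then show ?case
      using M T by (simp add: emeasure_distr)
  next
    case (mult u a)
    then show ?case
      by (simp add: nn_integral_cmult sum_distrib_left ac_simps)
  next
    case (add u v)
    then show ?case
      by (simp add: nn_integral_add sum.distrib distrib_left)
  next
    case (seq U)
    have conv: "integral\<^sup>N N (SUP n. U n) = (SUP n. integral\<^sup>N N (U n))" if "sets N = sets M" for N
      unfolding SUP_apply using seq.hyps(1,4) measurable_cong_sets[OF that refl]
      by (intro nn_integral_monotone_convergence_SUP) auto
    have "incseq (\<lambda>n. integral\<^sup>N (distr M M (T i)) (U n))" for i
      using seq.hyps(4) by (intro monoI nn_integral_mono) (auto dest: monoD simp: le_fun_def)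
    then have "(SUP n. c * (\<Sum>i\<in>I. integral\<^sup>N (distr M M (T i)) (U n))) =
        c * (\<Sum>i\<in>I. SUP n. integral\<^sup>N (distr M M (T i)) (U n))"
      by (simp add: ennreal_SUP_sum flip: SUP_mult_left_ennreal)
    then show ?case
      using seq.hyps(3) by (simp only: conv sets_distr)
  qed
  ultimately show ?thesis
    by simp
qed

lemma integral_self_similar:
  fixes T :: "'i \<Rightarrow> 'a \<Rightarrow> 'a" and f :: "'a \<Rightarrow> real"
  assumes "0 \<le> r" and T: "\<And>i. i \<in> I \<Longrightarrow> T i \<in> measurable M M"
    and M: "\<And>A. A \<in> sets M \<Longrightarrow> emeasure M A = ennreal r * (\<Sum>i\<in>I. emeasure M (T i -` A \<inter> space M))"
    and f: "integrable M f" "\<And>i. i \<in> I \<Longrightarrow> integrable M (\<lambda>x. f (T i x))"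
  shows "(\<integral>x. f x \<partial>M) = r * (\<Sum>i\<in>I. \<integral>x. f (T i x) \<partial>M)"
proof -
  have nonneg_case: "(\<integral>x. g x \<partial>M) = r * (\<Sum>i\<in>I. \<integral>x. g (T i x) \<partial>M)"
    if g: "integrable M g" "\<And>i. i \<in> I \<Longrightarrow> integrable M (\<lambda>x. g (T i x))" "\<And>x. 0 \<le> g x"
    for g :: "'a \<Rightarrow> real"
  proof -
    have int_nonneg: "0 \<le> (\<integral>x. g (T i x) \<partial>M)" for i
      using g(3) by (intro integral_nonneg_AE) auto
    have "(\<integral>\<^sup>+x. ennreal (g (T i x)) \<partial>M) = ennreal (\<integral>x. g (T i x) \<partial>M)" if "i \<in> I" for i
      using g(2,3) that by (intro nn_integral_eq_integral) auto
    moreover have "(\<integral>\<^sup>+x. ennreal (g x) \<partial>M) = ennreal (\<integral>x. g x \<partial>M)"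
      using g(1,3) by (intro nn_integral_eq_integral) auto
    ultimately have "ennreal (\<integral>x. g x \<partial>M) = ennreal r * (\<Sum>i\<in>I. ennreal (\<integral>x. g (T i x) \<partial>M))"
      using nn_integral_self_similar[OF T M, of "\<lambda>x. ennreal (g x)"] g(1) by simp
    also have "\<dots> = ennreal (r * (\<Sum>i\<in>I. \<integral>x. g (T i x) \<partial>M))"
      using int_nonneg \<open>0 \<le> r\<close> by (simp add: sum_ennreal ennreal_mult sum_nonneg)
    finally show ?thesis
      using int_nonneg \<open>0 \<le> r\<close> g(3) by (simp add: integral_nonneg_AE sum_nonneg)
  qed
  let ?pos = "\<lambda>x. max (f x) 0" and ?neg = "\<lambda>x. max (- f x) 0"
  have split: "h x = max (h x) 0 - max (- h x) 0" for h :: "'a \<Rightarrow> real" and x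
    by simp
  have "(\<integral>x. f x \<partial>M) = (\<integral>x. ?pos x \<partial>M) - (\<integral>x. ?neg x \<partial>M)"
    using f(1) by (subst split) (intro Bochner_Integration.integral_diff; auto)
  also have "\<dots> = r * (\<Sum>i\<in>I. (\<integral>x. ?pos (T i x) \<partial>M) - (\<integral>x. ?neg (T i x) \<partial>M))"
    using f by (simp add: nonneg_case sum_subtractf right_diff_distrib)
  also have "\<dots> = r * (\<Sum>i\<in>I. \<integral>x. f (T i x) \<partial>M)"
    using f(2) by (intro arg_cong[where f="\<lambda>t. r * t"] sum.cong refl) (subst split; auto)
  finally show ?thesis .
qed

section \<open>Cells and attractor of a carpet\<close>

lemma compact_usq: "compact usq"
  by (simp add: usq_def compact_Times)

lemma zero_in_usq: "0 \<in> usq"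
  by (simp add: usq_def zero_prod_def)

lemma usq_eq_interval: "usq = {0..(1, 1)}"
  by (simp add: usq_def atLeastAtMost_prod_eq zero_prod_def)

lemma dist_usc_map: "dist (usc_map k e i x) (usc_map k e i y) = dist x y / real k"
  by (simp add: usc_map_def dist_norm flip: scaleR_diff_right)

lemma continuous_on_usc_map: "continuous_on A (usc_map k e i)"
  unfolding usc_map_def by (intro continuous_intros)

lemma usc_cell_iff:
  assumes "k > 0"
  shows "y \<in> usc_map k e i ` usq \<longleftrightarrow> e i \<le> y \<and> y \<le> e i + (1 / real k, 1 / real k)"
proof -
  have "y \<in> usc_map k e i ` usq \<longleftrightarrow> real k *\<^sub>R (y - e i) \<in> usq"
    using assms by (force simp: usc_map_def image_iff)
  also have "\<dots> \<longleftrightarrow> e i \<le> y \<and> y \<le> e i + (1 / real k, 1 / real k)"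
    using assms by (cases y, cases "e i") (auto simp: usq_def field_simps)
  finally show ?thesis .
qed

definition cells_in_usq :: "nat \<Rightarrow> nat \<Rightarrow> (nat \<Rightarrow> real \<times> real) \<Rightarrow> bool" where
  "cells_in_usq k N e \<longleftrightarrow> (\<forall>i<N. usc_map k e i ` usq \<subseteq> usq)"

definition cells_separated :: "nat \<Rightarrow> nat \<Rightarrow> (nat \<Rightarrow> real \<times> real) \<Rightarrow> bool" where
  "cells_separated k N e \<longleftrightarrow> (\<forall>i<N. \<forall>j<N. i \<noteq> j \<longrightarrow>
     1 / real k \<le> \<bar>fst (e i) - fst (e j)\<bar> \<or> 1 / real k \<le> \<bar>snd (e i) - snd (e j)\<bar>)"

lemma cells_in_usq_offset:
  assumes "cells_in_usq k N e" "i < N"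
  shows "e i \<in> usq"
proof -
  have "usc_map k e i 0 \<in> usq"
    using assms zero_in_usq unfolding cells_in_usq_def by blast
  then show ?thesis by (simp add: usc_map_def)
qed

lemma cells_in_usq_map:
  "cells_in_usq k N e \<Longrightarrow> i < N \<Longrightarrow> x \<in> usq \<Longrightarrow> usc_map k e i x \<in> usq"
  unfolding cells_in_usq_def by blast

lemma cells_separated_inj:
  assumes "cells_separated k N e" "k > 0"
  shows "inj_on e {..<N}"
  using assms unfolding cells_separated_def inj_on_def by force

lemma usc_data_k_ge_3: "usc_data k N c \<Longrightarrow> 3 \<le> k"
  by (simp add: usc_data_def)

lemma usc_data_N_pos: "usc_data k N c \<Longrightarrow> 0 < N"
  by (auto simp: usc_data_def)

lemma usc_data_cells_in_usq: "usc_data k N c \<Longrightarrow> cells_in_usq k N c"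
  unfolding usc_data_def cells_in_usq_def by blast

lemma usc_data_cells_separated:
  assumes "usc_data k N c"
  shows "cells_separated k N c"
  unfolding cells_separated_def
proof (intro allI impI, rule ccontr)
  fix i j assume "i < N" "j < N" "i \<noteq> j"
    and close: "\<not> (1 / real k \<le> \<bar>fst (c i) - fst (c j)\<bar> \<or> 1 / real k \<le> \<bar>snd (c i) - snd (c j)\<bar>)"
  have k: "k > 0" using usc_data_k_ge_3[OF assms] by simp
  define S where "S = usc_map k c i ` usq \<inter> usc_map k c j ` usq"
  define B where "B = {max (fst (c i)) (fst (c j)) <..< min (fst (c i)) (fst (c j)) + 1 / real k} \<times>
    {max (snd (c i)) (snd (c j)) <..< min (snd (c i)) (snd (c j)) + 1 / real k}"
  have "B \<subseteq> S"
    by (auto simp: B_def S_def usc_cell_iff[OF k] less_eq_prod_def)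
  moreover have "open B" "B \<noteq> {}"
    using close by (auto simp: B_def open_Times)
  ultimately have "interior S \<noteq> {}"
    by (metis interior_maximal interior_open subset_empty)
  moreover have "S = {} \<or> (\<exists>a b. S = closed_segment a b)"
    using assms \<open>i < N\<close> \<open>j < N\<close> \<open>i \<noteq> j\<close> unfolding usc_data_def S_def by blast
  ultimately show False
    using interior_closed_segment_ge2[where 'a="real \<times> real"] by auto
qed

lemma usc_data_bottom_edge:
  "usc_data k N c \<Longrightarrow> {0..1} \<times> {0} \<subseteq> (\<Union>i<N. usc_map k c i ` usq)"
  unfolding usc_data_def by (elim conjE)

lemma usc_data_symmetric:
  "usc_data k N c \<Longrightarrow> g \<in> square_isometries \<Longrightarrow>
    g ` (\<Union>i<N. usc_map k c i ` usq) = (\<Union>i<N. usc_map k c i ` usq)"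
  unfolding usc_data_def by (elim conjE) (erule bspec)

lemma usc_data_origin_cell:
  assumes "usc_data k N c"
  obtains i where "i < N" "c i = 0"
proof -
  have k: "k > 0" using usc_data_k_ge_3[OF assms] by simp
  have "(0::real\<times>real) \<in> {0..1} \<times> {0}"
    by (simp add: zero_prod_def)
  then have "0 \<in> (\<Union>i<N. usc_map k c i ` usq)"
    using usc_data_bottom_edge[OF assms] ..
  then obtain i where i: "i < N" "0 \<in> usc_map k c i ` usq"
    by (elim UN_E) simp
  then have "c i \<le> 0"
    using k by (simp add: usc_cell_iff)
  moreover have "0 \<le> c i"
    using cells_in_usq_offset[OF usc_data_cells_in_usq[OF assms] \<open>i < N\<close>]
    by (simp add: usq_eq_interval)
  ultimately show ?thesis
    using that i(1) by (meson order.antisym)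
qed

lemma usc_data_opposite_corner_cell:
  assumes "usc_data k N c"
  obtains j where "j < N" "(1 - 1 / real k, 1 - 1 / real k) \<le> c j"
proof -
  have k: "k > 0" using usc_data_k_ge_3[OF assms] by simp
  define C where "C = (\<Union>i<N. usc_map k c i ` usq)"
  let ?g = "\<lambda>(x::real, y::real). (1 - x, 1 - y)"
  have "?g \<in> square_isometries"
    by (simp add: square_isometries_def)
  then have sym: "?g ` C = C"
    unfolding C_def by (rule usc_data_symmetric[OF assms])
  have "(0, 0) \<in> {0..1::real} \<times> {0::real}"
    by simp
  then have "(0, 0) \<in> C"
    unfolding C_def using usc_data_bottom_edge[OF assms] ..
  then have "?g (0, 0) \<in> C"
    by (subst sym[symmetric]) (rule imageI)
  then obtain j where "j < N" "(1, 1) \<in> usc_map k c j ` usq"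
    unfolding C_def by (elim UN_E) simp
  moreover have "(1, 1) \<le> c j + (1 / real k, 1 / real k) \<Longrightarrow> (1 - 1 / real k, 1 - 1 / real k) \<le> c j"
    by (cases "c j") simp
  ultimately show ?thesis
    using that k by (simp add: usc_cell_iff)
qed

lemma attractor_subset_invariant_closed:
  fixes f :: "'i \<Rightarrow> 'a::heine_borel \<Rightarrow> 'a"
  assumes "compact K" "K \<subseteq> (\<Union>i\<in>I. f i ` K)"
    and "closed S" "S \<noteq> {}" "\<And>i. i \<in> I \<Longrightarrow> f i ` S \<subseteq> S"
    and "\<And>i x y. i \<in> I \<Longrightarrow> dist (f i x) (f i y) \<le> r * dist x y" "0 \<le> r" "r < 1"
  shows "K \<subseteq> S"
proof (cases "K = {}")
  case False
  have "continuous_on K (\<lambda>y. infdist y S)"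
    by (intro continuous_on_infdist continuous_on_id)
  then obtain x where "x \<in> K" and x_max: "\<forall>y\<in>K. infdist y S \<le> infdist x S"
    using continuous_attains_sup[OF assms(1) False] by blast
  then obtain i y where "i \<in> I" "y \<in> K" "x = f i y"
    using assms(2) by blast
  obtain s where "s \<in> S" "infdist y S = dist y s"
    using infdist_attains_inf[OF assms(3,4)] by blast
  have "infdist x S \<le> dist (f i y) (f i s)"
    using \<open>x = f i y\<close> \<open>s \<in> S\<close> assms(5)[OF \<open>i \<in> I\<close>] by (auto intro: infdist_le)
  also have "\<dots> \<le> r * infdist y S"
    using assms(6)[OF \<open>i \<in> I\<close>] \<open>infdist y S = dist y s\<close> by simp
  also have "\<dots> \<le> r * infdist x S"
    using x_max \<open>y \<in> K\<close> assms(7) by (simp add: mult_left_mono)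
  finally have "infdist x S \<le> 0"
    using assms(8) infdist_nonneg[of x S] by (simp add: mult_le_cancel_right1)
  then have "infdist y S = 0" if "y \<in> K" for y
    using x_max that infdist_nonneg[of y S] by (meson order.antisym order.trans)
  then show ?thesis
    using in_closed_iff_infdist_zero[OF assms(3,4)] by blast
qed simp

lemma usc_subset_usq:
  assumes "usc k N c K"
  shows "K \<subseteq> usq"
proof (rule attractor_subset_invariant_closed)
  have data: "usc_data k N c"
    using assms by (simp add: usc_def)
  show "compact K" "K \<subseteq> (\<Union>i\<in>{..<N}. usc_map k c i ` K)"
    using assms by (auto simp: usc_def)
  show "closed usq" "usq \<noteq> {}"
    using compact_usq zero_in_usq by (auto intro: compact_imp_closed)
  show "usc_map k c i ` usq \<subseteq> usq" if "i \<in> {..<N}" for i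
    using that usc_data_cells_in_usq[OF data] by (simp add: cells_in_usq_def)
  show "dist (usc_map k c i x) (usc_map k c i y) \<le> (1 / real k) * dist x y" for i x y
    by (simp add: dist_usc_map)
  show "0 \<le> 1 / real k" "1 / real k < 1"
    using usc_data_k_ge_3[OF data] by auto
qed

lemma usc_subset_cells:
  assumes "usc k N c K"
  shows "K \<subseteq> (\<Union>j<N. usc_map k c j ` usq)"
proof -
  have "K = (\<Union>j<N. usc_map k c j ` K)"
    using assms by (simp add: usc_def)
  also have "\<dots> \<subseteq> (\<Union>j<N. usc_map k c j ` usq)"
    using usc_subset_usq[OF assms] by (intro UN_mono image_mono) auto
  finally show ?thesis .
qed

lemma usc_points_near_origin:
  assumes "usc k N c K" "0 < \<epsilon>"
  shows "\<exists>w\<in>K. 0 < fst w \<and> fst w < \<epsilon> \<and> 0 < snd w \<and> snd w < \<epsilon>"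
proof -
  have data: "usc_data k N c" and "K \<noteq> {}" and K_inv: "\<And>i. i < N \<Longrightarrow> usc_map k c i ` K \<subseteq> K"
    using assms(1) unfolding usc_def by auto
  have k: "3 \<le> k" using usc_data_k_ge_3[OF data] .
  obtain i0 where "i0 < N" "c i0 = 0"
    using usc_data_origin_cell[OF data] .
  obtain j where "j < N" and cj: "(1 - 1 / real k, 1 - 1 / real k) \<le> c j"
    using usc_data_opposite_corner_cell[OF data] .
  obtain y where "y \<in> K" using \<open>K \<noteq> {}\<close> by blast
  define x where "x = usc_map k c j y"
  have "x \<in> K" using K_inv[OF \<open>j < N\<close>] \<open>y \<in> K\<close> by (auto simp: x_def)
  have "y \<in> usq" "x \<in> usq" using usc_subset_usq[OF assms(1)] \<open>y \<in> K\<close> \<open>x \<in> K\<close> by auto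
  have "0 < 1 - 1 / real k" using k by simp
  then have "0 < fst (c j)" "0 < snd (c j)"
    using cj by (auto simp: less_eq_prod_def)
  moreover have "0 \<le> fst y" "0 \<le> snd y"
    using \<open>y \<in> usq\<close> by (auto simp: usq_def)
  ultimately have x_pos: "0 < fst x" "0 < snd x"
    by (auto simp: x_def usc_map_def intro: add_nonneg_pos)
  have scaled_in_K: "(1 / real k) ^ m *\<^sub>R x \<in> K" for m
  proof (induction m)
    case (Suc m)
    then have "usc_map k c i0 ((1 / real k) ^ m *\<^sub>R x) \<in> K"
      using K_inv[OF \<open>i0 < N\<close>] by blast
    then show ?case
      using \<open>c i0 = 0\<close> by (simp add: usc_map_def)
  qed (simp add: \<open>x \<in> K\<close>)
  obtain m where m: "(1 / real k) ^ m < \<epsilon>"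
    using real_arch_pow_inv[OF assms(2), of "1 / real k"] k by auto
  define t where "t = (1 / real k) ^ m"
  have "0 < t" "t < \<epsilon>" using k m by (simp_all add: t_def)
  moreover have "fst x \<le> 1" "snd x \<le> 1"
    using \<open>x \<in> usq\<close> by (auto simp: usq_def)
  ultimately have "t * fst x < \<epsilon>" "t * snd x < \<epsilon>" "0 < t * fst x" "0 < t * snd x"
    using x_pos by (auto intro: le_less_trans[OF mult_left_le])
  then show ?thesis
    using scaled_in_K[of m] by (intro bexI[of _ "t *\<^sub>R x"]) (simp_all add: t_def)
qed

section \<open>Rigidity of the offsets\<close>

lemma finite_not_le_margin:
  fixes p :: "real \<times> real"
  assumes "finite Q"
  obtains \<delta> where "0 < \<delta>" "\<delta> \<le> 1" "\<And>q. q \<in> Q \<Longrightarrow> q \<le> p + (\<delta>, \<delta>) \<Longrightarrow> q \<le> p"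
proof
  define gap where "gap q = max (fst q - fst p) (snd q - snd p)" for q
  define \<delta> where "\<delta> = Min (insert 1 (gap ` {q \<in> Q. \<not> q \<le> p})) / 2"
  have gap_pos: "0 < gap q" if "\<not> q \<le> p" for q
    using that by (auto simp: gap_def less_eq_prod_def)
  have "Min (insert 1 (gap ` {q \<in> Q. \<not> q \<le> p})) \<le> 1"
    using assms by (intro Min_le) auto
  then show "\<delta> \<le> 1"
    unfolding \<delta>_def by linarith
  show "0 < \<delta>"
    using assms gap_pos by (auto simp: \<delta>_def)
  show "q \<le> p" if "q \<in> Q" "q \<le> p + (\<delta>, \<delta>)" for q
  proof (rule ccontr)
    assume "\<not> q \<le> p"
    then have "2 * \<delta> \<le> gap q" "0 < gap q"
      using assms that(1) gap_pos by (auto simp: \<delta>_def)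
    then show False
      using that(2) by (auto simp: gap_def less_eq_prod_def)
  qed
qed

(* Map a point of K close to the origin by the map with offset p: the e'-cell containing the
   image has its corner below p, so it is an offset of e, which separation rules out. *)
lemma missing_offset_not_minimal:
  assumes k: "k > 0" and sep: "cells_separated k N e"
    and cover': "K \<subseteq> (\<Union>j<N. usc_map k e' j ` usq)"
    and inv: "\<And>i. i < N \<Longrightarrow> usc_map k e i ` K \<subseteq> K"
    and near_origin: "\<And>\<epsilon>. 0 < \<epsilon> \<Longrightarrow> \<exists>w\<in>K. 0 < fst w \<and> fst w < \<epsilon> \<and> 0 < snd w \<and> snd w < \<epsilon>"
    and p: "p \<in> e ` {..<N}" "p \<notin> e' ` {..<N}"
    and below_p: "\<And>q. q \<in> e' ` {..<N} \<Longrightarrow> q \<le> p \<Longrightarrow> q \<in> e ` {..<N}"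
  shows False
proof -
  obtain \<delta> where "0 < \<delta>" "\<delta> \<le> 1"
    and margin: "\<And>q. q \<in> e' ` {..<N} \<Longrightarrow> q \<le> p + (\<delta>, \<delta>) \<Longrightarrow> q \<le> p"
    using finite_not_le_margin[of "e' ` {..<N}" p] by blast
  obtain w where "w \<in> K" and w: "0 < fst w" "fst w < \<delta>" "0 < snd w" "snd w < \<delta>"
    using near_origin[OF \<open>0 < \<delta>\<close>] by blast
  obtain i where "i < N" "p = e i" using p(1) by blast
  define z where "z = usc_map k e i w"
  have z: "fst z = fst p + fst w / real k" "snd z = snd p + snd w / real k"
    by (simp_all add: z_def usc_map_def \<open>p = e i\<close>)
  have "fst w / real k \<le> fst w" "snd w / real k \<le> snd w"
    using k w by (simp_all add: divide_le_eq mult_le_cancel_left1)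
  then have w_k: "fst w / real k < \<delta>" "snd w / real k < \<delta>"
    "0 < fst w / real k" "0 < snd w / real k" "fst w / real k < 1 / real k" "snd w / real k < 1 / real k"
    using w \<open>\<delta> \<le> 1\<close> k by (auto simp: divide_strict_right_mono)
  have "z \<in> K" using inv[OF \<open>i < N\<close>] \<open>w \<in> K\<close> by (auto simp: z_def)
  then obtain j where "j < N" "z \<in> usc_map k e' j ` usq" using cover' by blast
  then have q: "e' j \<le> z" "z \<le> e' j + (1 / real k, 1 / real k)"
    using k by (simp_all add: usc_cell_iff)
  moreover have "z \<le> p + (\<delta>, \<delta>)"
    using z w_k by (simp add: less_eq_prod_def)
  ultimately have "e' j \<le> p"
    using margin[of "e' j"] \<open>j < N\<close> by (meson image_eqI lessThan_iff order.trans)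
  then obtain i' where "i' < N" "e' j = e i'"
    using below_p \<open>j < N\<close> by blast
  moreover have "e' j \<noteq> p" using p(2) \<open>j < N\<close> by blast
  ultimately have "1 / real k \<le> \<bar>fst p - fst (e' j)\<bar> \<or> 1 / real k \<le> \<bar>snd p - snd (e' j)\<bar>"
    using sep \<open>i < N\<close> \<open>p = e i\<close> unfolding cells_separated_def by metis
  then show False
    using \<open>e' j \<le> p\<close> q(2) z w_k by (auto simp: less_eq_prod_def)
qed

lemma offset_sets_eq:
  assumes k: "k > 0" and sep: "cells_separated k N e" "cells_separated k N e'"
    and cover: "K \<subseteq> (\<Union>j<N. usc_map k e j ` usq)" "K \<subseteq> (\<Union>j<N. usc_map k e' j ` usq)"
    and inv: "\<And>i. i < N \<Longrightarrow> usc_map k e i ` K \<subseteq> K" "\<And>i. i < N \<Longrightarrow> usc_map k e' i ` K \<subseteq> K"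
    and near_origin: "\<And>\<epsilon>. 0 < \<epsilon> \<Longrightarrow> \<exists>w\<in>K. 0 < fst w \<and> fst w < \<epsilon> \<and> 0 < snd w \<and> snd w < \<epsilon>"
  shows "e ` {..<N} = e' ` {..<N}"
proof (rule ccontr)
  let ?E = "e ` {..<N}" and ?E' = "e' ` {..<N}"
  assume "?E \<noteq> ?E'"
  define D where "D = (?E - ?E') \<union> (?E' - ?E)"
  have "finite D" "D \<noteq> {}"
    using \<open>?E \<noteq> ?E'\<close> by (auto simp: D_def)
  then obtain p where p: "p \<in> D" and minimal_p: "\<forall>q\<in>D. q \<le> p \<longrightarrow> p = q"
    by (metis finite_has_minimal)
  have minimal: "p = q" if "q \<in> D" "q \<le> p" for q
    using minimal_p that by blast
  show False
  proof (cases "p \<in> ?E")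
    case True
    then have "p \<notin> ?E'" using p by (simp add: D_def)
    moreover have "q \<in> ?E" if "q \<in> ?E'" "q \<le> p" for q
      using minimal[of q] that \<open>p \<notin> ?E'\<close> by (auto simp: D_def)
    ultimately show False
      using missing_offset_not_minimal[OF k sep(1) cover(2) inv(1) near_origin True] by simp
  next
    case False
    then have "p \<in> ?E'" using p by (simp add: D_def)
    moreover have "q \<in> ?E'" if "q \<in> ?E" "q \<le> p" for q
      using minimal[of q] that False by (auto simp: D_def)
    ultimately show False
      using missing_offset_not_minimal[OF k sep(2) cover(1) inv(2) near_origin _ False] by simp
  qed
qed

section \<open>Limits of carpets\<close>

lemma tendsto_usc_map:
  "(\<lambda>n. a n i) \<longlonglongrightarrow> b i \<Longrightarrow> xs \<longlonglongrightarrow> x \<Longrightarrow> (\<lambda>n. usc_map k (a n) i (xs n)) \<longlonglongrightarrow> usc_map k b i x"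
  unfolding usc_map_def by (intro tendsto_intros)

lemma cells_separated_limit:
  assumes "\<And>n. cells_separated k N (a n)" "\<And>i. i < N \<Longrightarrow> (\<lambda>n. a n i) \<longlonglongrightarrow> b i"
  shows "cells_separated k N b"
  unfolding cells_separated_def
proof (intro allI impI)
  fix i j assume "i < N" "j < N" "i \<noteq> j"
  let ?sep = "\<lambda>e. max \<bar>fst (e i) - fst (e j)\<bar> \<bar>snd (e i) - snd (e j)\<bar>"
  have "(\<lambda>n. ?sep (a n)) \<longlonglongrightarrow> ?sep b"
    using assms(2)[OF \<open>i < N\<close>] assms(2)[OF \<open>j < N\<close>] by (intro tendsto_intros)
  moreover have "\<forall>n. 1 / real k \<le> ?sep (a n)"
    using assms(1) \<open>i < N\<close> \<open>j < N\<close> \<open>i \<noteq> j\<close> by (auto simp: cells_separated_def le_max_iff_disj)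
  ultimately have "1 / real k \<le> ?sep b"
    by (intro LIMSEQ_le_const) auto
  then show "1 / real k \<le> \<bar>fst (b i) - fst (b j)\<bar> \<or> 1 / real k \<le> \<bar>snd (b i) - snd (b j)\<bar>"
    by (simp add: le_max_iff_disj)
qed

lemma cells_in_usq_limit:
  assumes "\<And>n. cells_in_usq k N (a n)" "\<And>i. i < N \<Longrightarrow> (\<lambda>n. a n i) \<longlonglongrightarrow> b i"
  shows "cells_in_usq k N b"
  unfolding cells_in_usq_def
proof (intro allI impI image_subsetI)
  fix i x assume "i < N" "x \<in> usq"
  have "usc_map k (a n) i x \<in> usq" for n
    using assms(1) \<open>i < N\<close> \<open>x \<in> usq\<close> by (rule cells_in_usq_map)
  moreover have "(\<lambda>n. usc_map k (a n) i x) \<longlonglongrightarrow> usc_map k b i x"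
    using assms(2)[OF \<open>i < N\<close>] by (intro tendsto_usc_map tendsto_const)
  ultimately show "usc_map k b i x \<in> usq"
    by (rule closed_sequentially[OF compact_imp_closed[OF compact_usq]])
qed

lemma usc_limit_cover:
  fixes a :: "nat \<Rightarrow> nat \<Rightarrow> real \<times> real"
  assumes U: "\<And>n. usc k N (a n) (L n)" and "compact K"
    and hd: "(\<lambda>n. hausdorff_dist (L n) K) \<longlonglongrightarrow> 0"
    and lim: "\<And>i. i < N \<Longrightarrow> (\<lambda>n. a n i) \<longlonglongrightarrow> b i"
  shows "K \<subseteq> (\<Union>j<N. usc_map k b j ` usq)"
proof
  fix x assume "x \<in> K"
  define C where "C = (\<Union>j<N. usc_map k b j ` usq)"
  define R where "R n = (\<Sum>i<N. dist (a n i) (b i))" for n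
  have "compact C"
    unfolding C_def by (intro compact_UN compact_continuous_image continuous_on_usc_map compact_usq) auto
  have "R \<longlonglongrightarrow> (\<Sum>i<N. dist (b i) (b i))"
    unfolding R_def using lim by (intro tendsto_sum tendsto_dist tendsto_const) auto
  then have "R \<longlonglongrightarrow> 0" by simp
  obtain y where y: "\<And>n. y n \<in> L n" "y \<longlonglongrightarrow> x"
    using hausdorff_limit_approximable[OF _ _ \<open>compact K\<close> hd \<open>x \<in> K\<close>] U by (auto simp: usc_def)
  have near: "C \<noteq> {} \<and> infdist (y n) C \<le> R n" for n
  proof -
    obtain j u where "j < N" "u \<in> usq" "y n = usc_map k (a n) j u"
      using usc_subset_cells[OF U] y(1) by blast
    moreover have "dist (a n j) (b j) \<le> R n"
      unfolding R_def using \<open>j < N\<close> by (intro member_le_sum) auto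
    moreover have "usc_map k b j u \<in> C"
      unfolding C_def using \<open>j < N\<close> \<open>u \<in> usq\<close> by blast
    ultimately show ?thesis
      by (auto intro!: infdist_le2 simp: usc_map_def dist_norm)
  qed
  have "(\<lambda>n. infdist (y n) C) \<longlonglongrightarrow> infdist x C"
    by (intro tendsto_infdist y(2))
  then have "infdist x C \<le> 0"
    using \<open>R \<longlonglongrightarrow> 0\<close> near by (intro LIMSEQ_le) auto
  then show "x \<in> C"
    using in_closed_iff_infdist_zero[OF compact_imp_closed[OF \<open>compact C\<close>]] near infdist_nonneg[of x C]
    by auto
qed

lemma usc_limit_invariant:
  fixes a :: "nat \<Rightarrow> nat \<Rightarrow> real \<times> real"
  assumes U: "\<And>n. usc k N (a n) (L n)" and "compact K" "K \<noteq> {}"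
    and hd: "(\<lambda>n. hausdorff_dist (L n) K) \<longlonglongrightarrow> 0"
    and lim: "\<And>i. i < N \<Longrightarrow> (\<lambda>n. a n i) \<longlonglongrightarrow> b i" and "i < N"
  shows "usc_map k b i ` K \<subseteq> K"
proof (intro image_subsetI)
  fix x assume "x \<in> K"
  obtain y where y: "\<And>n. y n \<in> L n" "y \<longlonglongrightarrow> x"
    using hausdorff_limit_approximable[OF _ _ \<open>compact K\<close> hd \<open>x \<in> K\<close>] U by (auto simp: usc_def)
  have "usc_map k (a n) i (y n) \<in> L n" for n
    using U[of n] y(1)[of n] \<open>i < N\<close> unfolding usc_def by blast
  moreover have "(\<lambda>n. usc_map k (a n) i (y n)) \<longlonglongrightarrow> usc_map k b i x"
    by (intro tendsto_usc_map lim \<open>i < N\<close> y(2))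
  ultimately show "usc_map k b i x \<in> K"
    using U by (intro hausdorff_limit_mem[OF _ \<open>compact K\<close> \<open>K \<noteq> {}\<close> hd]) (auto simp: usc_def)
qed

section \<open>Measures on the square and the averaging operator\<close>

lemma usc_measure_space: "usc_measure k N e \<nu> \<Longrightarrow> space \<nu> = usq"
  unfolding usc_measure_def using sets_eq_imp_space_eq[of \<nu> "restrict_space borel usq"]
  by (simp add: space_restrict_space)

lemma measurable_usc_measure_cong:
  "usc_measure k N e \<nu> \<Longrightarrow> measurable \<nu> M = measurable (restrict_space borel usq) M"
  "usc_measure k N e \<nu> \<Longrightarrow> measurable M \<nu> = measurable M (restrict_space borel usq)"
  unfolding usc_measure_def by (auto intro!: measurable_cong_sets)

lemma measurable_usc_map:
  assumes "usc_measure k N e \<nu>" "cells_in_usq k N e" "i < N"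
  shows "usc_map k e i \<in> measurable \<nu> \<nu>"
  unfolding measurable_usc_measure_cong[OF assms(1)]
proof (rule measurable_restrict_space2)
  show "usc_map k e i \<in> space (restrict_space borel usq) \<rightarrow> usq"
    using assms(2,3) by (auto simp: space_restrict_space cells_in_usq_def)
  show "usc_map k e i \<in> restrict_space borel usq \<rightarrow>\<^sub>M borel"
    by (rule borel_measurable_continuous_on_restrict[OF continuous_on_usc_map])
qed

lemma integrable_usc_measure:
  fixes h :: "real \<times> real \<Rightarrow> real"
  assumes "usc_measure k N e \<nu>" "continuous_on usq h"
  shows "integrable \<nu> h"
proof -
  interpret prob_space \<nu> using assms(1) by (simp add: usc_measure_def)
  obtain B where "\<forall>x\<in>usq. norm (h x) \<le> B"
    using compact_imp_bounded[OF compact_continuous_image[OF assms(2) compact_usq]]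
    by (auto simp: bounded_iff)
  moreover have "h \<in> borel_measurable \<nu>"
    unfolding measurable_usc_measure_cong[OF assms(1)]
    using assms(2) by (rule borel_measurable_continuous_on_restrict)
  ultimately show ?thesis
    using usc_measure_space[OF assms(1)] by (intro integrable_const_bound[where B=B] AE_I2) auto
qed

lemma continuous_on_comp_usc_map:
  assumes "cells_in_usq k N e" "i < N" "continuous_on usq g"
  shows "continuous_on usq (\<lambda>x. g (usc_map k e i x))"
proof (rule continuous_on_compose2[OF assms(3) continuous_on_usc_map])
  show "usc_map k e i ` usq \<subseteq> usq"
    using assms(1,2) by (simp add: cells_in_usq_def)
qed

(* The operator dual to \<mu> \<mapsto> (1/N) \<Sum>_i \<mu> \<circ> \<Psi>_i\<^sup>-\<^sup>1. *)
definition usc_average :: "nat \<Rightarrow> nat \<Rightarrow> (nat \<Rightarrow> real \<times> real) \<Rightarrow> (real \<times> real \<Rightarrow> real) \<Rightarrow> real \<times> real \<Rightarrow> real" where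
  "usc_average k N e g x = (\<Sum>i<N. g (usc_map k e i x)) / real N"

lemma usc_average_iterate_Suc:
  "(usc_average k N e ^^ Suc m) g x = (\<Sum>i<N. (usc_average k N e ^^ m) g (usc_map k e i x)) / real N"
  by (simp add: usc_average_def)

lemma continuous_on_usc_average:
  assumes "cells_in_usq k N e" "continuous_on usq g"
  shows "continuous_on usq (usc_average k N e g)"
  unfolding usc_average_def divide_inverse
  using continuous_on_comp_usc_map[OF assms(1) _ assms(2)]
  by (intro continuous_on_mult_right continuous_on_sum) auto

lemma integral_usc_average:
  assumes \<nu>: "usc_measure k N e \<nu>" and e: "cells_in_usq k N e" and g: "continuous_on usq g"
  shows "(\<integral>x. usc_average k N e g x \<partial>\<nu>) = (\<integral>x. g x \<partial>\<nu>)"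
proof -
  have int: "integrable \<nu> (\<lambda>x. g (usc_map k e i x))" if "i < N" for i
    using integrable_usc_measure[OF \<nu> continuous_on_comp_usc_map[OF e that g]] .
  have "(\<integral>x. g x \<partial>\<nu>) = (1 / real N) * (\<Sum>i<N. \<integral>x. g (usc_map k e i x) \<partial>\<nu>)"
  proof (rule integral_self_similar)
    show "usc_map k e i \<in> measurable \<nu> \<nu>" if "i \<in> {..<N}" for i
      using measurable_usc_map[OF \<nu> e] that by simp
    show "emeasure \<nu> A = ennreal (1 / real N) * (\<Sum>i<N. emeasure \<nu> (usc_map k e i -` A \<inter> space \<nu>))"
      if "A \<in> sets \<nu>" for A
      using \<nu> that by (simp add: usc_measure_def)
  qed (use int integrable_usc_measure[OF \<nu> g] in auto)
  also have "\<dots> = (\<integral>x. usc_average k N e g x \<partial>\<nu>)"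
    unfolding usc_average_def using int by (simp add: Bochner_Integration.integral_sum)
  finally show ?thesis ..
qed

lemma continuous_on_usc_average_iterate:
  "cells_in_usq k N e \<Longrightarrow> continuous_on usq g \<Longrightarrow> continuous_on usq ((usc_average k N e ^^ m) g)"
  by (induction m) (simp_all add: continuous_on_usc_average)

lemma integral_usc_average_iterate:
  assumes "usc_measure k N e \<nu>" "cells_in_usq k N e" "continuous_on usq g"
  shows "(\<integral>x. (usc_average k N e ^^ m) g x \<partial>\<nu>) = (\<integral>x. g x \<partial>\<nu>)"
  by (induction m)
    (simp_all add: integral_usc_average[OF assms(1,2)] continuous_on_usc_average_iterate[OF assms(2,3)])

lemma usc_average_oscillation:
  assumes "cells_in_usq k N e" "0 < N" "0 < k"
    and osc: "\<And>u v. u \<in> usq \<Longrightarrow> v \<in> usq \<Longrightarrow> dist u v \<le> r \<Longrightarrow> \<bar>g u - g v\<bar> \<le> \<eta>"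
    and "x \<in> usq" "y \<in> usq" "dist x y \<le> real k * r"
  shows "\<bar>usc_average k N e g x - usc_average k N e g y\<bar> \<le> \<eta>"
proof -
  have "\<bar>g (usc_map k e i x) - g (usc_map k e i y)\<bar> \<le> \<eta>" if "i < N" for i
  proof (rule osc)
    show "usc_map k e i x \<in> usq" "usc_map k e i y \<in> usq"
      using assms(1,5,6) that by (simp_all add: cells_in_usq_map)
    show "dist (usc_map k e i x) (usc_map k e i y) \<le> r"
      using assms(3,7) by (simp add: dist_usc_map divide_le_eq mult.commute)
  qed
  then have "(\<Sum>i<N. \<bar>g (usc_map k e i x) - g (usc_map k e i y)\<bar>) \<le> real N * \<eta>"
    using sum_mono[of "{..<N}" _ "\<lambda>_. \<eta>"] by simp
  then have "\<bar>\<Sum>i<N. g (usc_map k e i x) - g (usc_map k e i y)\<bar> \<le> real N * \<eta>"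
    by (rule order_trans[OF sum_abs])
  moreover have "usc_average k N e g x - usc_average k N e g y =
      (\<Sum>i<N. g (usc_map k e i x) - g (usc_map k e i y)) / real N"
    by (simp add: usc_average_def sum_subtractf diff_divide_distrib)
  ultimately show ?thesis
    using assms(2) by (simp add: divide_le_eq mult.commute)
qed

lemma usc_average_iterate_oscillation:
  assumes "cells_in_usq k N e" "0 < N" "0 < k"
    and osc: "\<And>u v. u \<in> usq \<Longrightarrow> v \<in> usq \<Longrightarrow> dist u v \<le> r \<Longrightarrow> \<bar>g u - g v\<bar> \<le> \<eta>"
    and "x \<in> usq" "y \<in> usq" "dist x y \<le> real k ^ m * r"
  shows "\<bar>(usc_average k N e ^^ m) g x - (usc_average k N e ^^ m) g y\<bar> \<le> \<eta>"
  using assms(5-7)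
proof (induction m arbitrary: x y)
  case 0
  then show ?case using osc by simp
next
  case (Suc m)
  have "dist x y \<le> real k * (real k ^ m * r)"
    using Suc.prems(3) by (simp add: mult.assoc)
  then show ?case
    using usc_average_oscillation[OF assms(1-3) Suc.IH Suc.prems(1,2)] by simp
qed

lemma usc_average_iterate_approximates_integral:
  assumes "2 \<le> k" "0 < N" "continuous_on usq g" "0 < \<eta>"
  obtains m where "\<And>e \<nu>. usc_measure k N e \<nu> \<Longrightarrow> cells_in_usq k N e \<Longrightarrow>
    \<bar>(\<integral>x. g x \<partial>\<nu>) - (usc_average k N e ^^ m) g 0\<bar> \<le> \<eta>"
proof -
  obtain d where "0 < d" and d: "\<And>u v. u \<in> usq \<Longrightarrow> v \<in> usq \<Longrightarrow> dist v u < d \<Longrightarrow> dist (g v) (g u) < \<eta>"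
    using compact_uniformly_continuous[OF assms(3) compact_usq] assms(4)
    unfolding uniformly_continuous_on_def by metis
  define r where "r = d / 2"
  have osc: "\<bar>g u - g v\<bar> \<le> \<eta>" if "u \<in> usq" "v \<in> usq" "dist u v \<le> r" for u v
    using d[of v u] that \<open>0 < d\<close> by (simp add: r_def dist_real_def)
  obtain m where m: "diameter usq / r < real k ^ m"
    using real_arch_pow[of "real k"] assms(1) by auto
  have diam: "dist x y \<le> real k ^ m * r" if "x \<in> usq" "y \<in> usq" for x y
  proof -
    have "dist x y \<le> diameter usq"
      using diameter_bounded_bound[OF compact_imp_bounded[OF compact_usq] that] .
    also have "\<dots> \<le> real k ^ m * r"
      using m \<open>0 < d\<close> by (simp add: r_def divide_less_eq)
    finally show ?thesis .
  qed
  show ?thesis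
  proof (rule that)
    fix e \<nu> assume \<nu>: "usc_measure k N e \<nu>" and e: "cells_in_usq k N e"
    interpret prob_space \<nu> using \<nu> by (simp add: usc_measure_def)
    let ?h = "(usc_average k N e ^^ m) g"
    have h: "\<bar>?h x - ?h 0\<bar> \<le> \<eta>" if "x \<in> usq" for x
      using usc_average_iterate_oscillation[OF e assms(2) _ osc that zero_in_usq diam[OF that zero_in_usq]]
        assms(1) by simp
    have int: "integrable \<nu> ?h"
      by (intro integrable_usc_measure[OF \<nu>] continuous_on_usc_average_iterate e assms(3))
    have "?h x \<le> ?h 0 + \<eta>" "?h 0 - \<eta> \<le> ?h x" if "x \<in> space \<nu>" for x
      using h[of x] that unfolding usc_measure_space[OF \<nu>] abs_le_iff by linarith+
    then have "(\<integral>x. ?h x \<partial>\<nu>) \<le> ?h 0 + \<eta>" "?h 0 - \<eta> \<le> (\<integral>x. ?h x \<partial>\<nu>)"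
      by (auto intro!: integral_le_const integral_ge_const int AE_I2)
    then show "\<bar>(\<integral>x. g x \<partial>\<nu>) - ?h 0\<bar> \<le> \<eta>"
      using integral_usc_average_iterate[OF \<nu> e assms(3), of m] by (simp add: abs_le_iff)
  qed
qed

lemma usc_average_offsets_cong:
  assumes "inj_on e {..<N}" "inj_on e' {..<N}" "e ` {..<N} = e' ` {..<N}"
  shows "usc_average k N e = usc_average k N e'"
proof (intro ext)
  fix g :: "real \<times> real \<Rightarrow> real" and x :: "real \<times> real"
  define F where "F p = g ((1 / real k) *\<^sub>R x + p)" for p
  have "(\<Sum>i<N. g (usc_map k e i x)) = sum F (e ` {..<N})"
    using sum.reindex[OF assms(1), of F] by (simp add: F_def usc_map_def)
  also have "\<dots> = (\<Sum>i<N. g (usc_map k e' i x))"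
    using sum.reindex[OF assms(2), of F] assms(3) by (simp add: F_def usc_map_def)
  finally show "usc_average k N e g x = usc_average k N e' g x"
    by (simp add: usc_average_def)
qed

lemma tendsto_usc_average_iterate:
  assumes a: "\<And>n. cells_in_usq k N (a n)" and b: "cells_in_usq k N b"
    and lim: "\<And>i. i < N \<Longrightarrow> (\<lambda>n. a n i) \<longlonglongrightarrow> b i" and g: "continuous_on usq g"
    and "\<And>n. xs n \<in> usq" "x \<in> usq" "xs \<longlonglongrightarrow> x"
  shows "(\<lambda>n. (usc_average k N (a n) ^^ m) g (xs n)) \<longlonglongrightarrow> (usc_average k N b ^^ m) g x"
  using assms(5-7)
proof (induction m arbitrary: xs x)
  case 0
  then show ?case
    by (simp add: continuous_on_tendsto_compose[OF g])
next
  case (Suc m)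
  have "(\<lambda>n. (usc_average k N (a n) ^^ m) g (usc_map k (a n) i (xs n)))
      \<longlonglongrightarrow> (usc_average k N b ^^ m) g (usc_map k b i x)" if "i < N" for i
    using a b that Suc.prems
    by (intro Suc.IH tendsto_usc_map lim) (auto intro: cells_in_usq_map)
  then show ?case
    unfolding usc_average_iterate_Suc divide_inverse by (intro tendsto_mult_right tendsto_sum) simp
qed

lemma usc_limit_offset_set:
  fixes a :: "nat \<Rightarrow> nat \<Rightarrow> real \<times> real" and L :: "nat \<Rightarrow> (real \<times> real) set"
  assumes U: "\<And>n. usc k N (a n) (L n)" and K: "usc k N c K"
    and hd: "(\<lambda>n. hausdorff_dist (L n) K) \<longlonglongrightarrow> 0"
    and lim: "\<And>i. i < N \<Longrightarrow> (\<lambda>n. a n i) \<longlonglongrightarrow> b i"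
  shows "c ` {..<N} = b ` {..<N}"
proof (rule offset_sets_eq)
  have data: "usc_data k N c" and "compact K" "K \<noteq> {}"
    using K by (auto simp: usc_def)
  show "0 < k" "cells_separated k N c"
    using usc_data_k_ge_3[OF data] usc_data_cells_separated[OF data] by auto
  have "cells_separated k N (a n)" for n
    using U[of n] by (auto simp: usc_def usc_data_cells_separated)
  then show "cells_separated k N b"
    using lim by (rule cells_separated_limit)
  show "K \<subseteq> (\<Union>j<N. usc_map k b j ` usq)"
    by (rule usc_limit_cover[OF U \<open>compact K\<close> hd lim])
  show "usc_map k b i ` K \<subseteq> K" if "i < N" for i
    by (rule usc_limit_invariant[OF U \<open>compact K\<close> \<open>K \<noteq> {}\<close> hd lim that])
  show "usc_map k c i ` K \<subseteq> K" if "i < N" for i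
    using K that by (auto simp: usc_def)
qed (use usc_subset_cells[OF K] usc_points_near_origin[OF K] in auto)

lemma usc_integral_tendsto_of_offsets_tendsto:
  fixes a :: "nat \<Rightarrow> nat \<Rightarrow> real \<times> real" and L :: "nat \<Rightarrow> (real \<times> real) set"
    and g :: "real \<times> real \<Rightarrow> real"
  assumes U: "\<And>n. usc k N (a n) (L n)" and K: "usc k N c K"
    and hd: "(\<lambda>n. hausdorff_dist (L n) K) \<longlonglongrightarrow> 0"
    and \<nu>s: "\<And>n. usc_measure k N (a n) (\<nu>s n)" and \<mu>: "usc_measure k N c \<mu>"
    and lim: "\<And>i. i < N \<Longrightarrow> (\<lambda>n. a n i) \<longlonglongrightarrow> b i"
    and g: "continuous_on usq g"
  shows "(\<lambda>n. \<integral>x. g x \<partial>\<nu>s n) \<longlonglongrightarrow> (\<integral>x. g x \<partial>\<mu>)"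
proof -
  have data: "usc_data k N c"
    using K by (simp add: usc_def)
  have k: "3 \<le> k" and "0 < N"
    using usc_data_k_ge_3[OF data] usc_data_N_pos[OF data] .
  have a_sep: "cells_separated k N (a n)" and a_usq: "cells_in_usq k N (a n)" for n
    using U[of n] by (auto simp: usc_def usc_data_cells_separated usc_data_cells_in_usq)
  have b_sep: "cells_separated k N b"
    using a_sep lim by (rule cells_separated_limit)
  have b_usq: "cells_in_usq k N b"
    using a_usq lim by (rule cells_in_usq_limit)
  have "c ` {..<N} = b ` {..<N}"
    by (rule usc_limit_offset_set[OF U K hd lim])
  moreover have "inj_on b {..<N}" "inj_on c {..<N}"
    using cells_separated_inj[OF b_sep] cells_separated_inj[OF usc_data_cells_separated[OF data]] k
    by auto
  ultimately have same_average: "usc_average k N b = usc_average k N c"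
    by (intro usc_average_offsets_cong) auto
  show ?thesis
  proof (rule LIMSEQ_uniform_approx)
    fix \<eta> :: real assume "0 < \<eta>"
    obtain m where m: "\<And>e \<nu>. usc_measure k N e \<nu> \<Longrightarrow> cells_in_usq k N e \<Longrightarrow>
        \<bar>(\<integral>x. g x \<partial>\<nu>) - (usc_average k N e ^^ m) g 0\<bar> \<le> \<eta>"
      using usc_average_iterate_approximates_integral[OF _ \<open>0 < N\<close> g \<open>0 < \<eta>\<close>, of k] k
      by auto
    have "(\<lambda>n. (usc_average k N (a n) ^^ m) g 0) \<longlonglongrightarrow> (usc_average k N b ^^ m) g 0"
      using a_usq b_usq lim g zero_in_usq zero_in_usq by (rule tendsto_usc_average_iterate) auto
    then show "\<exists>b B. (\<forall>n. \<bar>(\<integral>x. g x \<partial>\<nu>s n) - b n\<bar> \<le> \<eta>) \<and> \<bar>(\<integral>x. g x \<partial>\<mu>) - B\<bar> \<le> \<eta> \<and> b \<longlonglongrightarrow> B"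
      using m[OF \<nu>s a_usq] m[OF \<mu> usc_data_cells_in_usq[OF data]] same_average by metis
  qed
qed

theorem proposition7p3:
  fixes k N :: nat
    and cs :: "nat \<Rightarrow> nat \<Rightarrow> real \<times> real" and Ks :: "nat \<Rightarrow> (real \<times> real) set"
    and c :: "nat \<Rightarrow> real \<times> real" and K :: "(real \<times> real) set"
    and \<mu>s :: "nat \<Rightarrow> (real \<times> real) measure" and \<mu> :: "(real \<times> real) measure"
  assumes "\<And>n. usc k N (cs n) (Ks n)"
    and "usc k N c K"
    and "(\<lambda>n. hausdorff_dist (Ks n) K) \<longlonglongrightarrow> 0"
    and "\<And>n. usc_measure k N (cs n) (\<mu>s n)"
    and "usc_measure k N c \<mu>"
  shows "weak_conv_on usq \<mu>s \<mu>"
  unfolding weak_conv_on_def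
proof (intro allI impI)
  fix f :: "real \<times> real \<Rightarrow> real"
  assume "continuous_on usq f \<and> bounded (f ` usq)"
  then have f: "continuous_on usq f" by simp
  show "(\<lambda>n. \<integral>x. f x \<partial>\<mu>s n) \<longlonglongrightarrow> (\<integral>x. f x \<partial>\<mu>)"
  proof (rule LIMSEQ_subsubseq)
    fix r :: "nat \<Rightarrow> nat" assume "strict_mono r"
    have "cs (r n) i \<in> usq" if "i < N" for n i
      using assms(1) that by (auto simp: usc_def intro: cells_in_usq_offset usc_data_cells_in_usq)
    then obtain s b where "strict_mono s" and lim: "\<forall>i<N. (\<lambda>n. cs (r (s n)) i) \<longlonglongrightarrow> b i"
      using convergent_subseq_finite_tuple[OF compact_usq, of N "\<lambda>n. cs (r n)"] by blast
    have "(\<lambda>n. hausdorff_dist (Ks (r (s n))) K) \<longlonglongrightarrow> 0"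
      using LIMSEQ_subseq_LIMSEQ[OF assms(3) strict_mono_o[OF \<open>strict_mono r\<close> \<open>strict_mono s\<close>]]
      by (simp add: o_def)
    then have "(\<lambda>n. \<integral>x. f x \<partial>\<mu>s (r (s n))) \<longlonglongrightarrow> (\<integral>x. f x \<partial>\<mu>)"
      using lim by (intro usc_integral_tendsto_of_offsets_tendsto[OF assms(1,2) _ assms(4,5) _ f]) auto
    then show "\<exists>s. strict_mono s \<and> (\<lambda>n. \<integral>x. f x \<partial>\<mu>s (r (s n))) \<longlonglongrightarrow> (\<integral>x. f x \<partial>\<mu>)"
      using \<open>strict_mono s\<close> by blast
  qed
qed

end
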